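(* For every $\beta>1$, the set $\mathrm{Per}(\sigma|_{X_\beta})$ of all periodic points of the $\beta$-shift $X_\beta$ is strongly linkable.
   Context: Shift: for an alphabet $\mathcal A=\{0,1,\dots,r-1\}$, $\mathcal A^{\mathbb N}$ carries the metric $\rho(x,y)=2^{-\min\{k:x_k\ne y_k\}}$ for $x\ne y$, and $\sigma((\omega_i)_i)=(\omega_{i+1})_i$. $\beta$-shift: fix $\beta>1$, $T_\beta(x)=\beta x\bmod1$. The $\beta$-expansion of $1$ is $d_\beta=(d_j)_{j\ge1}$ with $d_j=\lfloor\beta T_\beta^{j-1}(1)\rfloor$. If $d_\beta$ ends in $0^\infty$ with last nonzero digit $d_k$, set $\widehat d_\beta=(d_1\dots d_{k-1}(d_k-1))^\infty$; otherwise $\widehat d_\beta=d_\beta$. The $\beta$-shift $X_\beta\subset\{0,\dots,\lfloor\beta\rfloor\}^{\mathbb N}$ is the closure of the set of sequences $b$ with $\sigma^k(b)\prec\widehat d_\beta$ (lexicographic order) for all $k\ge0$. $B(x,n,\varepsilon)=\{y:\rho(\sigma^jy,\sigma^jx)<\varepsilon,\ 0\le j<n\}$. A set $K$ of periodic points is strongly linkable if for all $y_1,y_2\in K$ and $\varepsilon>0$ there is $N=N(y_1,y_2,\varepsilon)$ such that for all integers $p_1,p_2\ge N$ with $\sigma^{p_j}y_j=y_j$ ($j=1,2$) there exist $z\in K$ and integers $q_1\le q_2$ with $\sigma^{q_2}z=z$, $p_1\le q_1\le(1+\varepsilon)p_1$, $z\in B(y_1,p_1,\varepsilon)$, $p_2\le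 q_2-q_1\le(1+\varepsilon)p_2$ and $\sigma^{q_1}z\in B(y_2,p_2,\varepsilon)$. *)

theory Defs
  imports Complex_Main
begin

type_synonym seq = "nat \<Rightarrow> nat"

definition shift :: "seq \<Rightarrow> seq" where
  "shift w = (\<lambda>i. w (Suc i))"

definition rho :: "seq \<Rightarrow> seq \<Rightarrow> real" where
  "rho x y = (if x = y then 0 else 2 powr (- real (LEAST k. x k \<noteq> y k)))"

definition bowen_ball :: "seq \<Rightarrow> nat \<Rightarrow> real \<Rightarrow> seq set" where
  "bowen_ball x n eps = {y. \<forall>j<n. rho ((shift ^^ j) y) ((shift ^^ j) x) < eps}"

definition lex_less :: "seq \<Rightarrow> seq \<Rightarrow> bool" where
  "lex_less a b \<longleftrightarrow> (\<exists>k. (\<forall>i<k. a i = b i) \<and> a k < b k)"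

definition beta_map :: "real \<Rightarrow> real \<Rightarrow> real" where
  "beta_map \<beta> x = \<beta> * x - of_int \<lfloor>\<beta> * x\<rfloor>"

text \<open>beta-expansion of 1, 0-indexed: beta_exp1 b j is d_(j+1) = floor(beta T^j(1)).\<close>
definition beta_exp1 :: "real \<Rightarrow> seq" where
  "beta_exp1 \<beta> j = nat \<lfloor>\<beta> * (beta_map \<beta> ^^ j) 1\<rfloor>"

text \<open>The modified expansion hat d_beta. If d ends in 0^infinity with last nonzero
  digit at (0-based) position m, hat d = (d_0 ... d_(m-1) (d_m - 1))^infinity.\<close>
definition beta_exp1_hat :: "real \<Rightarrow> seq" where
  "beta_exp1_hat \<beta> =
    (let d = beta_exp1 \<beta> in
     if (\<exists>k. \<forall>j\<ge>k. d j = 0) \<and> (\<exists>j. d j \<noteq> 0) then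
       (let m = (GREATEST j. d j \<noteq> 0) in
        (\<lambda>i. if i mod (Suc m) = m then d m - 1 else d (i mod (Suc m))))
     else d)"

text \<open>The beta-shift: closure (in the metric rho) of the set of sequences over
  {0..floor beta} all of whose shifts are lexicographically below hat d_beta.\<close>
definition beta_shift_base :: "real \<Rightarrow> seq set" where
  "beta_shift_base \<beta> =
    {b. (\<forall>i. b i \<le> nat \<lfloor>\<beta>\<rfloor>) \<and> (\<forall>k. lex_less ((shift ^^ k) b) (beta_exp1_hat \<beta>))}"

definition beta_shift :: "real \<Rightarrow> seq set" where
  "beta_shift \<beta> = {x. \<forall>e>0. \<exists>b\<in>beta_shift_base \<beta>. rho x b < e}"

definition per_points :: "seq set \<Rightarrow> seq set" where
  "per_points X = {x \<in> X. \<exists>p>0. (shift ^^ p) x = x}"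

definition strongly_linkable :: "seq set \<Rightarrow> bool" where
  "strongly_linkable K \<longleftrightarrow>
    (\<forall>y1\<in>K. \<forall>y2\<in>K. \<forall>eps>0. \<exists>N::nat. \<forall>p1 p2::nat.
       p1 \<ge> N \<and> p2 \<ge> N \<and> (shift ^^ p1) y1 = y1 \<and> (shift ^^ p2) y2 = y2 \<longrightarrow>
       (\<exists>z\<in>K. \<exists>q1 q2::nat. q1 \<le> q2 \<and> (shift ^^ q2) z = z \<and>
          p1 \<le> q1 \<and> real q1 \<le> (1 + eps) * real p1 \<and>
          z \<in> bowen_ball y1 p1 eps \<and>
          p2 \<le> q2 - q1 \<and> real (q2 - q1) \<le> (1 + eps) * real p2 \<and>
          (shift ^^ q1) z \<in> bowen_ball y2 p2 eps))"

end

theory Submission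
  imports Defs
begin

(*
  Let D = hat d_beta.  Every point x of the closure X_beta has digits
  in {0..floor beta} and no shift of x is lexicographically above D.  Given periodic
  points y1, y2 (periods P1, P2) and lengths a, b, consider the periodic sequence z with
  period block  y1[0,a) 0^P1 y2[0,b) 0^P2.  Because D_0 >= 1 and a periodic point with a
  nonzero first digit has a nonzero digit in every window of length of its period, each
  shift of z falls strictly below D already inside the current block: either it leaves the
  copied part of y_i below D, or it copies D up to the zero block, where D has a nonzero
  digit that z does not.  Hence z lies in the defining set of X_beta, it is periodic, and
  choosing a = p1 + K, b = p2 + K (with 2^-K < eps) it eps-shadows y1 for p1 steps and then
  y2 for p2 steps, while the extra lengths K + P_i are at most eps * p_i for large p_i.
*)

section \<open>Shifts and periodic sequences\<close>

lemma shift_pow: "(shift ^^ k) z = (\<lambda>i. z (i + k))"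
  by (induction k arbitrary: z) (auto simp: shift_def funpow_Suc_right)

lemma periodic_mod:
  assumes "(shift ^^ P) u = u"
  shows "u i = u (i mod P)"
proof -
  have "u (n + P * q) = u n" for n q
  proof (induction q)
    case (Suc q)
    have "u (n + P * q + P) = u (n + P * q)"
      using fun_cong[OF assms, of "n + P * q"] by (simp add: shift_pow)
    then show ?case using Suc by (simp add: algebra_simps)
  qed simp
  from this[of "i mod P" "i div P"] show ?thesis by simp
qed

lemma periodic_shift_mod:
  assumes "(shift ^^ Q) z = z"
  shows "(shift ^^ k) z = (shift ^^ (k mod Q)) z"
  unfolding shift_pow
proof (rule ext)
  fix i
  have "z (i + k) = z ((i + k) mod Q)" by (rule periodic_mod[OF assms])
  also have "(i + k) mod Q = (i + k mod Q) mod Q" by (simp add: mod_add_right_eq)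
  also have "z \<dots> = z (i + k mod Q)" by (rule periodic_mod[OF assms, symmetric])
  finally show "z (i + k) = z (i + k mod Q)" .
qed

lemma periodic_value_recurs:
  assumes "(shift ^^ P) u = u" "0 < P"
  shows "\<exists>j<P. u (n + j) = u 0"
proof -
  define j where "j = (P - n mod P) mod P"
  have "(n + j) mod P = 0"
  proof (cases "n mod P = 0")
    case False
    have "n = P * (n div P) + n mod P" "n mod P < P" using assms(2) by simp_all
    moreover have "j = P - n mod P"
      unfolding j_def by (rule mod_less) (use False assms(2) in linarith)
    ultimately have "n + j = P * (n div P) + P" by linarith
    then show ?thesis by simp
  qed (simp add: j_def)
  then have "u (n + j) = u 0" using periodic_mod[OF assms(1)] by metis
  moreover have "j < P" using assms(2) by (simp add: j_def)
  ultimately show ?thesis by blast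
qed

section \<open>The metric and Bowen balls\<close>

lemma rho_less_if_agree:
  assumes "\<forall>i\<le>K. x i = y i" "2 powr - real K < e"
  shows "rho x y < e"
proof (cases "x = y")
  case True
  have "0 < 2 powr - real K" by simp
  then have "0 < e" using assms(2) by linarith
  then show ?thesis using True by (simp add: rho_def)
next
  case False
  define L where "L = (LEAST k. x k \<noteq> y k)"
  have "x L \<noteq> y L" unfolding L_def by (rule LeastI_ex) (use False in auto)
  then have "K < L" using assms(1) by (meson not_le)
  then have "2 powr - real L < 2 powr - real K" by simp
  moreover have "rho x y = 2 powr - real L" using False by (simp add: rho_def L_def)
  ultimately show ?thesis using assms(2) by linarith
qed

lemma agree_if_rho_less:
  assumes "rho x y < 2 powr - real M" "i \<le> M"
  shows "x i = y i"
proof (cases "x = y")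
  case False
  define L where "L = (LEAST k. x k \<noteq> y k)"
  have "2 powr - real L < 2 powr - real M" using assms(1) False by (simp add: rho_def L_def)
  then have "i < L" using assms(2) by simp
  then show ?thesis unfolding L_def using not_less_Least by blast
qed simp

lemma exists_small_dyadic: "(eps::real) > 0 \<Longrightarrow> \<exists>K::nat. 2 powr - real K < eps"
proof -
  assume "eps > 0"
  from real_arch_pow_inv[OF this, of "1/2"] obtain n where "(1/2::real) ^ n < eps" by auto
  moreover have "2 powr - real n = (1/2::real) ^ n"
    by (simp add: powr_minus powr_realpow power_one_over inverse_eq_divide)
  ultimately show ?thesis by metis
qed

lemma bowen_ball_if_agree:
  assumes "\<forall>i<n + K. z i = y i" "2 powr - real K < eps"
  shows "z \<in> bowen_ball y n eps"
  unfolding bowen_ball_def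
proof (intro CollectI allI impI)
  fix j assume "j < n"
  then have "\<forall>i\<le>K. z (i + j) = y (i + j)" using assms(1) by auto
  then show "rho ((shift ^^ j) z) ((shift ^^ j) y) < eps"
    unfolding shift_pow by (rule rho_less_if_agree[OF _ assms(2)])
qed

section \<open>The lexicographic order\<close>

lemma lex_less_asym: "lex_less a b \<Longrightarrow> \<not> lex_less b a"
  unfolding lex_less_def by (metis linorder_neqE_nat not_less_iff_gr_or_eq)

lemma not_lex_less_first_difference:
  assumes "\<not> lex_less D u" "\<forall>i<m. u i = D i" "u m \<noteq> D m"
  shows "u m < D m"
  using assms unfolding lex_less_def by (metis linorder_neqE_nat)

definition admissible :: "seq \<Rightarrow> seq \<Rightarrow> bool" where
  "admissible D x \<longleftrightarrow> (\<forall>k. \<not> lex_less D ((shift ^^ k) x))"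

section \<open>The beta-shift\<close>

lemma beta_shift_approx:
  assumes "x \<in> beta_shift \<beta>"
  obtains b where "b \<in> beta_shift_base \<beta>" "\<And>i. i \<le> M \<Longrightarrow> x i = b i"
proof -
  have "(0::real) < 2 powr - real M" by simp
  then obtain b where "b \<in> beta_shift_base \<beta>" "rho x b < 2 powr - real M"
    using assms unfolding beta_shift_def by blast
  then show ?thesis using that agree_if_rho_less by blast
qed

lemma beta_shift_base_subset: "beta_shift_base \<beta> \<subseteq> beta_shift \<beta>"
  unfolding beta_shift_def by (auto simp: rho_def)

lemma beta_shift_digit_bound:
  assumes "x \<in> beta_shift \<beta>"
  shows "x i \<le> nat \<lfloor>\<beta>\<rfloor>"
proof -
  obtain b where "b \<in> beta_shift_base \<beta>" "x i = b i"
    using beta_shift_approx[OF assms, of i] by blast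
  then show ?thesis unfolding beta_shift_base_def by auto
qed

lemma beta_shift_admissible:
  assumes "x \<in> beta_shift \<beta>"
  shows "admissible (beta_exp1_hat \<beta>) x"
  unfolding admissible_def
proof (intro allI notI)
  fix k
  assume "lex_less (beta_exp1_hat \<beta>) ((shift ^^ k) x)"
  then obtain j where j: "\<forall>i<j. beta_exp1_hat \<beta> i = x (i + k)" "beta_exp1_hat \<beta> j < x (j + k)"
    unfolding lex_less_def shift_pow by auto
  obtain b where b: "b \<in> beta_shift_base \<beta>" "\<And>i. i \<le> j + k \<Longrightarrow> x i = b i"
    using beta_shift_approx[OF assms] by blast
  have "lex_less (beta_exp1_hat \<beta>) ((shift ^^ k) b)"
    unfolding lex_less_def shift_pow using j b(2) by (intro exI[of _ j]) auto
  moreover have "lex_less ((shift ^^ k) b) (beta_exp1_hat \<beta>)"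
    using b(1) unfolding beta_shift_base_def by auto
  ultimately show False using lex_less_asym by blast
qed

lemma beta_map_nonneg: "0 \<le> beta_map \<beta> x"
  unfolding beta_map_def by (simp add: of_int_floor_le)

text \<open>If all digits of the beta-expansion of 1 after the first vanish, then T_beta(1) = 0:
  otherwise the orbit T^(j+1)(1) = beta^j T(1) would eventually exceed 1/beta.\<close>
lemma beta_map_one_eq_zero:
  assumes \<beta>: "\<beta> > 1" and zero_digits: "\<forall>j\<ge>1. beta_exp1 \<beta> j = 0"
  shows "beta_map \<beta> 1 = 0"
proof -
  define T where "T = beta_map \<beta>"
  have floor_zero: "\<lfloor>\<beta> * (T ^^ Suc j) 1\<rfloor> = 0" for j
  proof -
    have "\<lfloor>\<beta> * (T ^^ Suc j) 1\<rfloor> \<le> 0"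
      using zero_digits[rule_format, of "Suc j"] by (simp add: beta_exp1_def T_def)
    moreover have "0 \<le> (T ^^ Suc j) 1" by (simp add: T_def beta_map_nonneg)
    then have "0 \<le> \<beta> * (T ^^ Suc j) 1" using \<beta> by simp
    ultimately show ?thesis by linarith
  qed
  have orbit: "(T ^^ Suc j) 1 = \<beta> ^ j * T 1" for j
  proof (induction j)
    case (Suc j)
    have "(T ^^ Suc (Suc j)) 1 = T ((T ^^ Suc j) 1)" by simp
    also have "\<dots> = \<beta> * (T ^^ Suc j) 1"
      using floor_zero[of j] unfolding T_def beta_map_def by simp
    finally have "(T ^^ Suc (Suc j)) 1 = \<beta> * (T ^^ Suc j) 1" .
    then show ?case using Suc by simp
  qed simp
  have small: "\<beta> ^ Suc j * T 1 < 1" for j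
    using floor_zero[of j] orbit[of j] by (simp add: algebra_simps) linarith
  show ?thesis
  proof (rule ccontr)
    assume "beta_map \<beta> 1 \<noteq> 0"
    then have pos: "T 1 > 0" using beta_map_nonneg[of \<beta> 1] by (simp add: T_def)
    obtain n where "1 / T 1 < \<beta> ^ n" using real_arch_pow[OF \<beta>] by blast
    then have "1 < \<beta> ^ n * T 1" using pos by (simp add: field_simps)
    also have "\<dots> \<le> \<beta> ^ Suc n * T 1" using \<beta> pos by simp
    finally show False using small[of n] by simp
  qed
qed

text \<open>The first digit of hat d_beta is nonzero.  The only subtle case is d_beta = d_0 0^infinity,
  where beta is an integer at least 2 and hat d_beta = (d_0 - 1)^infinity.\<close>
lemma beta_exp1_hat_first_digit:
  assumes \<beta>: "\<beta> > 1"
  shows "beta_exp1_hat \<beta> 0 \<noteq> 0"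
proof -
  define d where "d = beta_exp1 \<beta>"
  have d0: "d 0 = nat \<lfloor>\<beta>\<rfloor>" by (simp add: d_def beta_exp1_def)
  then have d0_pos: "d 0 \<ge> 1" using \<beta> by linarith
  show ?thesis
  proof (cases "(\<exists>k. \<forall>j\<ge>k. d j = 0) \<and> (\<exists>j. d j \<noteq> 0)")
    case False
    then have "beta_exp1_hat \<beta> = d"
      by (simp only: beta_exp1_hat_def Let_def d_def[symmetric] if_False)
    then show ?thesis using d0_pos by simp
  next
    case True
    then obtain k where k: "\<forall>j\<ge>k. d j = 0" by blast
    define m where "m = (GREATEST j. d j \<noteq> 0)"
    have "\<forall>j. d j \<noteq> 0 \<longrightarrow> j \<le> k" using k by (meson nat_le_linear)
    then have m_bound: "j \<le> m" if "d j \<noteq> 0" for j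
      unfolding m_def using that by (intro Greatest_le_nat[where b = k]) auto
    have hat0: "beta_exp1_hat \<beta> 0 = (if m = 0 then d m - 1 else d 0)"
      using True unfolding beta_exp1_hat_def d_def[symmetric] Let_def m_def by simp
    show ?thesis
    proof (cases "m = 0")
      case True
      then have "\<forall>j\<ge>1. beta_exp1 \<beta> j = 0" using m_bound by (fastforce simp: d_def)
      from beta_map_one_eq_zero[OF \<beta> this] have "\<beta> = of_int \<lfloor>\<beta>\<rfloor>"
        by (simp add: beta_map_def)
      then have "d 0 \<ge> 2" using \<beta> d0 by linarith
      then show ?thesis using hat0 True by simp
    qed (use hat0 d0_pos in simp)
  qed
qed

section \<open>Following an admissible periodic point by a block of zeros\<close>

text \<open>If v copies the first n > 0 digits of u and then has P zeros, then v is strictly below D: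
  either u drops below D within the copied part, or u copies D there, so u_0 = D_0 is nonzero
  and u has a nonzero digit in the next P places, which forces D to have one as well.\<close>
lemma lex_less_zero_block:
  fixes D u v :: seq
  assumes D0: "D 0 \<noteq> 0" and u_le: "\<not> lex_less D u"
    and per: "(shift ^^ P) u = u" "0 < P" and "0 < n"
    and copy: "\<forall>i<n. v i = u i" and zeros: "\<forall>i<P. v (n + i) = 0"
  shows "lex_less v D"
proof -
  define S where "S i \<longleftrightarrow> (i < n \<and> u i \<noteq> D i) \<or> (n \<le> i \<and> D i \<noteq> 0)" for i
  have "\<exists>i<n + P. S i"
  proof (cases "\<exists>i<n. u i \<noteq> D i")
    case True
    then show ?thesis unfolding S_def by (meson trans_less_add1)
  next
    case False
    then have "u 0 \<noteq> 0" using D0 \<open>0 < n\<close> by auto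
    then obtain j where j: "j < P" "u (n + j) \<noteq> 0"
      using periodic_value_recurs[OF per, of n] by metis
    show ?thesis
    proof (rule ccontr)
      assume no_S: "\<not> ?thesis"
      then have "u (n + j) \<noteq> D (n + j)" using j unfolding S_def by auto
      then obtain m where m: "u m \<noteq> D m" "\<forall>i<m. u i = D i"
        using exists_least_iff[of "\<lambda>i. u i \<noteq> D i"] by blast
      have "u m < D m" using not_lex_less_first_difference[OF u_le m(2,1)] .
      moreover have "m \<le> n + j" using m \<open>u (n + j) \<noteq> D (n + j)\<close> by (meson not_le)
      moreover have "n \<le> m" using m(1) False by (meson not_le)
      ultimately show False using no_S j(1) unfolding S_def by fastforce
    qed
  qed
  then obtain m where m: "S m" "m < n + P" "\<forall>i<m. \<not> S i"
    using exists_least_iff[of "\<lambda>i. i < n + P \<and> S i"] by (metis less_trans)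
  have below: "v i = D i" if "i < m" for i
  proof (cases "i < n")
    case True
    then show ?thesis using m(3) that copy unfolding S_def by auto
  next
    case False
    then have "v i = 0" using zeros[rule_format, of "i - n"] m(2) that by simp
    then show ?thesis using m(3) that False unfolding S_def by auto
  qed
  have "v m < D m"
  proof (cases "m < n")
    case True
    then have "u m < D m"
      using not_lex_less_first_difference[OF u_le] m(1,3) unfolding S_def by auto
    then show ?thesis using copy True by simp
  next
    case False
    then have "v m = 0" using zeros[rule_format, of "m - n"] m(2) by simp
    then show ?thesis using m(1) False unfolding S_def by simp
  qed
  then show ?thesis unfolding lex_less_def using below by blast
qed

lemma lex_less_shifts_of_zero_padded_prefix:
  fixes D y v :: seq
  assumes D0: "D 0 \<noteq> 0" and adm: "admissible D y"
    and per: "(shift ^^ P) y = y" "0 < P"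
    and copy: "\<forall>i<a. v i = y i" and zeros: "\<forall>i<P. v (a + i) = 0"
    and "t < a + P"
  shows "lex_less ((shift ^^ t) v) D"
proof (cases "t < a")
  case True
  have "(shift ^^ P) ((shift ^^ t) y) = (shift ^^ t) y"
    by (metis per(1) funpow_add comp_apply add.commute)
  moreover have "\<not> lex_less D ((shift ^^ t) y)" using adm unfolding admissible_def by blast
  moreover have "\<forall>i<a - t. (shift ^^ t) v i = (shift ^^ t) y i"
    using copy by (simp add: shift_pow)
  moreover have "\<forall>i<P. (shift ^^ t) v (a - t + i) = 0"
    using zeros True by (simp add: shift_pow algebra_simps)
  ultimately show ?thesis
    using lex_less_zero_block[of D "(shift ^^ t) y" P "a - t"] D0 per(2) True by simp
next
  case False
  then have "v t = 0" using zeros[rule_format, of "t - a"] \<open>t < a + P\<close> by simp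
  then show ?thesis using D0 unfolding lex_less_def shift_pow by (intro exI[of _ 0]) simp
qed

section \<open>Gluing two periodic orbits\<close>

definition glue :: "seq \<Rightarrow> nat \<Rightarrow> nat \<Rightarrow> seq \<Rightarrow> nat \<Rightarrow> nat \<Rightarrow> seq" where
  "glue y1 a g1 y2 b g2 i =
     (let t = i mod (a + g1 + b + g2) in
      if t < a then y1 t else if t < a + g1 then 0
      else if t < a + g1 + b then y2 (t - (a + g1)) else 0)"

lemma glue_periodic:
  "(shift ^^ (a + g1 + b + g2)) (glue y1 a g1 y2 b g2) = glue y1 a g1 y2 b g2"
  unfolding shift_pow by (rule ext) (simp add: glue_def)

lemma glue_first_block:
  shows "i < a \<Longrightarrow> glue y1 a g1 y2 b g2 i = y1 i"
    and "i < g1 \<Longrightarrow> glue y1 a g1 y2 b g2 (a + i) = 0"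
  by (simp_all add: glue_def)

lemma glue_second_block:
  shows "i < b \<Longrightarrow> (shift ^^ (a + g1)) (glue y1 a g1 y2 b g2) i = y2 i"
    and "i < g2 \<Longrightarrow> (shift ^^ (a + g1)) (glue y1 a g1 y2 b g2) (b + i) = 0"
  by (simp_all add: glue_def shift_pow)

lemma glue_per_point:
  assumes \<beta>: "\<beta> > 1" and y1: "y1 \<in> beta_shift \<beta>" and y2: "y2 \<in> beta_shift \<beta>"
    and per1: "(shift ^^ P1) y1 = y1" "0 < P1" and per2: "(shift ^^ P2) y2 = y2" "0 < P2"
  shows "glue y1 a P1 y2 b P2 \<in> per_points (beta_shift \<beta>)"
proof -
  define D where "D = beta_exp1_hat \<beta>"
  define z where "z = glue y1 a P1 y2 b P2"
  define Q where "Q = a + P1 + b + P2"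
  have D0: "D 0 \<noteq> 0" using beta_exp1_hat_first_digit[OF \<beta>] by (simp add: D_def)
  have z_per: "(shift ^^ Q) z = z" "0 < Q"
    using glue_periodic per1(2) by (simp_all add: z_def Q_def)
  have below_D: "lex_less ((shift ^^ k) z) D" for k
  proof -
    define t where "t = k mod Q"
    have "t < Q" using z_per(2) by (simp add: t_def)
    have "lex_less ((shift ^^ t) z) D"
    proof (cases "t < a + P1")
      case True
      then show ?thesis
        using lex_less_shifts_of_zero_padded_prefix[where D = D and y = y1 and P = P1
            and a = a and v = z] D0 per1 beta_shift_admissible[OF y1] glue_first_block
        by (simp add: D_def z_def)
    next
      case False
      define s where "s = t - (a + P1)"
      have "(shift ^^ s) ((shift ^^ (a + P1)) z) = (shift ^^ t) z"
        using False by (simp add: s_def shift_pow algebra_simps)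
      moreover have "s < b + P2" using \<open>t < Q\<close> False by (simp add: s_def Q_def)
      ultimately show ?thesis
        using lex_less_shifts_of_zero_padded_prefix[where D = D and y = y2 and P = P2 and a = b
            and v = "(shift ^^ (a + P1)) z" and t = s] D0 per2 beta_shift_admissible[OF y2]
          glue_second_block
        by (simp add: D_def z_def)
    qed
    then show ?thesis using periodic_shift_mod[OF z_per(1)] by (simp add: t_def)
  qed
  have "z i \<le> nat \<lfloor>\<beta>\<rfloor>" for i
    using beta_shift_digit_bound[OF y1] beta_shift_digit_bound[OF y2]
    by (simp add: z_def glue_def Let_def)
  then have "z \<in> beta_shift_base \<beta>"
    unfolding beta_shift_base_def using below_D by (simp add: D_def)
  then show ?thesis
    using beta_shift_base_subset z_per unfolding per_points_def z_def by blast
qed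

text \<open>The glued orbit shadows y1 for p1 steps and then y2 for p2 steps, with return times
  q1 = p1 + K + P1 and q2 = q1 + p2 + K + P2, once the padding K + P1 + P2 is at most eps
  times each p_i.\<close>
lemma glued_orbit_shadows:
  assumes \<beta>: "\<beta> > 1" and y1: "y1 \<in> beta_shift \<beta>" and y2: "y2 \<in> beta_shift \<beta>"
    and per1: "(shift ^^ P1) y1 = y1" "0 < P1" and per2: "(shift ^^ P2) y2 = y2" "0 < P2"
    and K: "2 powr - real K < eps"
    and long1: "real (K + P1 + P2) \<le> eps * real p1"
    and long2: "real (K + P1 + P2) \<le> eps * real p2"
  shows "\<exists>z\<in>per_points (beta_shift \<beta>). \<exists>q1 q2. q1 \<le> q2 \<and> (shift ^^ q2) z = z \<and>
           p1 \<le> q1 \<and> real q1 \<le> (1 + eps) * real p1 \<and> z \<in> bowen_ball y1 p1 eps \<and>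
           p2 \<le> q2 - q1 \<and> real (q2 - q1) \<le> (1 + eps) * real p2 \<and>
           (shift ^^ q1) z \<in> bowen_ball y2 p2 eps"
proof -
  define z where "z = glue y1 (p1 + K) P1 y2 (p2 + K) P2"
  define q1 where "q1 = p1 + K + P1"
  define q2 where "q2 = q1 + (p2 + K + P2)"
  have q2_eq: "q2 = (p1 + K) + P1 + (p2 + K) + P2" by (simp add: q1_def q2_def)
  have "z \<in> per_points (beta_shift \<beta>)"
    unfolding z_def by (rule glue_per_point[OF \<beta> y1 y2 per1 per2])
  moreover have "(shift ^^ q2) z = z" unfolding q2_eq z_def by (rule glue_periodic)
  moreover have "z \<in> bowen_ball y1 p1 eps"
    using glue_first_block(1) by (intro bowen_ball_if_agree[OF _ K]) (simp add: z_def)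
  moreover have "(shift ^^ q1) z \<in> bowen_ball y2 p2 eps"
    using glue_second_block(1) by (intro bowen_ball_if_agree[OF _ K]) (simp add: z_def q1_def)
  moreover have "real q1 \<le> (1 + eps) * real p1" "real (q2 - q1) \<le> (1 + eps) * real p2"
    using long1 long2 by (simp_all add: q1_def q2_def algebra_simps)
  ultimately show ?thesis by (intro bexI[of _ z] exI[of _ q1] exI[of _ q2]) (simp add: q1_def q2_def)
qed

lemma eventually_multiple_dominates:
  fixes eps :: real
  assumes "eps > 0"
  obtains N :: nat where "\<And>p. N \<le> p \<Longrightarrow> real c \<le> eps * real p"
proof
  fix p :: nat
  assume "nat \<lceil>real c / eps\<rceil> \<le> p"
  then have "real c / eps \<le> real p" by linarith
  then show "real c \<le> eps * real p" using assms by (simp add: pos_divide_le_eq mult.commute)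
qed

theorem proposition5p11:
  fixes \<beta> :: real
  assumes "\<beta> > 1"
  shows "strongly_linkable (per_points (beta_shift \<beta>))"
  unfolding strongly_linkable_def
proof (intro ballI allI impI)
  fix y1 y2 and eps :: real
  assume y1: "y1 \<in> per_points (beta_shift \<beta>)" and y2: "y2 \<in> per_points (beta_shift \<beta>)"
    and eps: "eps > 0"
  obtain P1 where per1: "(shift ^^ P1) y1 = y1" "0 < P1" and y1X: "y1 \<in> beta_shift \<beta>"
    using y1 unfolding per_points_def by blast
  obtain P2 where per2: "(shift ^^ P2) y2 = y2" "0 < P2" and y2X: "y2 \<in> beta_shift \<beta>"
    using y2 unfolding per_points_def by blast
  obtain K :: nat where K: "2 powr - real K < eps"
    using exists_small_dyadic[OF eps] by blast
  obtain N :: nat where N: "\<And>p. N \<le> p \<Longrightarrow> real (K + P1 + P2) \<le> eps * real p"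
    using eventually_multiple_dominates[OF eps] by blast
  show "\<exists>N. \<forall>p1 p2. N \<le> p1 \<and> N \<le> p2 \<and> (shift ^^ p1) y1 = y1 \<and> (shift ^^ p2) y2 = y2 \<longrightarrow>
          (\<exists>z\<in>per_points (beta_shift \<beta>). \<exists>q1 q2. q1 \<le> q2 \<and> (shift ^^ q2) z = z \<and>
             p1 \<le> q1 \<and> real q1 \<le> (1 + eps) * real p1 \<and> z \<in> bowen_ball y1 p1 eps \<and>
             p2 \<le> q2 - q1 \<and> real (q2 - q1) \<le> (1 + eps) * real p2 \<and>
             (shift ^^ q1) z \<in> bowen_ball y2 p2 eps)"
    using glued_orbit_shadows[OF assms y1X y2X per1 per2 K] N by blast
qed

end
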